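(* Let $S_2$ be a closed orientable surface of genus two and let $(\alpha,\beta)$ be a minimally intersecting filling pair on $S_2$, so that $S_2\setminus(\alpha\cup\beta)$ consists of exactly two disks $D_1,D_2$. Then $\{|D_1|,|D_2|\}$ is either $\{4,12\}$ or $\{8,8\}$. Equivalently, there is no minimally intersecting filling pair of type $\{6,10\}$ on $S_2$.
   Context: A filling pair on a closed orientable surface $S_g$ is a pair $(\alpha,\beta)$ of homotopically distinct simple closed curves in minimal position such that $S_g\setminus(\alpha\cup\beta)$ is a disjoint union of topological disks. It is minimally intersecting (minimal) if the geometric intersection number $i(\alpha,\beta)$ (equivalently, the number of complementary disks) is minimal among all filling pairs of $S_g$; for $g=2$ a minimal filling pair has $i(\alpha,\beta)=4$ and exactly two complementary disks. For a complementary disk $D$, $|D|$ denotes its number of sides, i.e. the number of arcs of $\alpha$ and of $\beta$ (between consecutive intersection points) on its boundary; the two numbers sum to $16$. A minimal filling pair on $S_2$ is said to be of type $\{a,b\}$ if its two complementary disks have $a$ and $b$ sides. *)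

theory Defs
  imports Main "HOL-Library.Multiset"
begin

text \<open>
Combinatorial (fat-graph) model of a pair of transverse simple closed curves
alpha, beta on a closed oriented surface meeting in n points.

Intersection points are labelled 0,...,n-1 in the order in which alpha
(oriented) passes through them.  beta (oriented) passes through them in the
order pi 0, pi 1, ..., pi (n-1), where pi is a bijection of {0..<n}.
At the point v, beta crosses alpha from right to left (w.r.t. the orientation
of the surface) iff sg v holds.

Half-edges: pairs (v, d) with v < n and d < 4, where around v in
counterclockwise order
  d = 0 : outgoing alpha half-edge ("east"),
  d = 1 : "north",
  d = 2 : incoming alpha half-edge ("west"),
  d = 3 : "south";
the outgoing beta half-edge at v is north if sg v, south otherwise.
\<close>

definition half_edges :: "nat \<Rightarrow> (nat \<times> nat) set" where
  "half_edges n = {0..<n} \<times> {0..<4}"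

definition beta_out :: "(nat \<Rightarrow> bool) \<Rightarrow> nat \<Rightarrow> nat" where
  "beta_out sg v = (if sg v then 1 else 3)"

definition beta_in :: "(nat \<Rightarrow> bool) \<Rightarrow> nat \<Rightarrow> nat" where
  "beta_in sg v = (if sg v then 3 else 1)"

definition edge_inv ::
  "nat \<Rightarrow> (nat \<Rightarrow> nat) \<Rightarrow> (nat \<Rightarrow> bool) \<Rightarrow> nat \<times> nat \<Rightarrow> nat \<times> nat" where
  "edge_inv n pi sg h =
     (let v = fst h; d = snd h; j = inv_into {0..<n} pi v in
      if d = 0 then (Suc v mod n, 2)
      else if d = 2 then ((v + n - 1) mod n, 0)
      else if d = beta_out sg v then
        (let w = pi (Suc j mod n) in (w, beta_in sg w))
      else
        (let w = pi ((j + n - 1) mod n) in (w, beta_out sg w)))"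

definition rot :: "nat \<times> nat \<Rightarrow> nat \<times> nat" where
  "rot h = (fst h, Suc (snd h) mod 4)"

text \<open>Face permutation: follow an edge, then turn at the vertex.  Its cycles are
the boundary walks of the complementary regions; each step crosses one side.\<close>
definition face_perm ::
  "nat \<Rightarrow> (nat \<Rightarrow> nat) \<Rightarrow> (nat \<Rightarrow> bool) \<Rightarrow> nat \<times> nat \<Rightarrow> nat \<times> nat" where
  "face_perm n pi sg = rot \<circ> edge_inv n pi sg"

definition face_of ::
  "nat \<Rightarrow> (nat \<Rightarrow> nat) \<Rightarrow> (nat \<Rightarrow> bool) \<Rightarrow> nat \<times> nat \<Rightarrow> (nat \<times> nat) set" where
  "face_of n pi sg h = {(face_perm n pi sg ^^ k) h | k. True}"

text \<open>The complementary regions (disks); the number of sides of a region is the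
cardinality of its face cycle.\<close>
definition faces :: "nat \<Rightarrow> (nat \<Rightarrow> nat) \<Rightarrow> (nat \<Rightarrow> bool) \<Rightarrow> (nat \<times> nat) set set" where
  "faces n pi sg = face_of n pi sg ` half_edges n"

definition face_sizes :: "nat \<Rightarrow> (nat \<Rightarrow> nat) \<Rightarrow> (nat \<Rightarrow> bool) \<Rightarrow> nat multiset" where
  "face_sizes n pi sg = image_mset card (mset_set (faces n pi sg))"

text \<open>A filling pair with i(alpha,beta) = n on the closed orientable surface of
genus g: the surface obtained by capping the faces of the fat graph alpha \<union> beta
with disks has Euler characteristic n - 2n + #faces = 2 - 2g, and the curves are
in minimal position, i.e. (bigon criterion) no complementary disk is a bigon.\<close>
definition filling_pair :: "nat \<Rightarrow> nat \<Rightarrow> (nat \<Rightarrow> nat) \<Rightarrow> (nat \<Rightarrow> bool) \<Rightarrow> bool" where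
  "filling_pair g n pi sg \<longleftrightarrow>
     n \<ge> 1 \<and> bij_betw pi {0..<n} {0..<n} \<and>
     int n - 2 * int n + int (card (faces n pi sg)) = 2 - 2 * int g \<and>
     (\<forall>F \<in> faces n pi sg. card F \<noteq> 2)"

definition minimal_filling_pair :: "nat \<Rightarrow> nat \<Rightarrow> (nat \<Rightarrow> nat) \<Rightarrow> (nat \<Rightarrow> bool) \<Rightarrow> bool" where
  "minimal_filling_pair g n pi sg \<longleftrightarrow>
     filling_pair g n pi sg \<and> (\<forall>m pi' sg'. filling_pair g m pi' sg' \<longrightarrow> n \<le> m)"

end

theory Submission
  imports Defs
begin

text \<open>
  The pair with beta visiting the points in the order 0, 1, 3, 2 and all crossings positive
  fills the genus-2 surface with i(alpha, beta) = 4, so a minimal pair has at most four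
  intersection points.  With at most four points there are only finitely many combinatorial
  configurations; for each one the face permutation is decomposed into its cycles by
  computation, and whenever the Euler characteristic is -2 and there is no bigon, the cycle
  lengths are 4 and 12 or 8 and 8.
\<close>

fun iter_until :: "nat \<Rightarrow> ('a \<Rightarrow> 'a) \<Rightarrow> 'a \<Rightarrow> 'a \<Rightarrow> 'a list option" where
  "iter_until 0 f y x = None"
| "iter_until (Suc m) f y x =
     (if f x = y then Some [x] else map_option ((#) x) (iter_until m f y (f x)))"

lemma iter_until_SomeD:
  assumes "iter_until m f y x = Some xs"
  shows "xs = map (\<lambda>k. (f ^^ k) x) [0..<length xs]" and "(f ^^ length xs) x = y"
    and "x \<in> set xs"
proof -
  have "xs = map (\<lambda>k. (f ^^ k) x) [0..<length xs] \<and> (f ^^ length xs) x = y \<and> x \<in> set xs"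
    using assms
  proof (induction m arbitrary: x xs)
    case 0
    then show ?case by simp
  next
    case (Suc m)
    show ?case
    proof (cases "f x = y")
      case True
      then show ?thesis using Suc.prems by auto
    next
      case False
      then obtain ys where ys: "iter_until m f y (f x) = Some ys" and xs: "xs = x # ys"
        using Suc.prems by auto
      have ih: "ys = map (\<lambda>k. (f ^^ k) (f x)) [0..<length ys]" "(f ^^ length ys) (f x) = y"
        using Suc.IH[OF ys] by auto
      have "map (\<lambda>k. (f ^^ k) x) [0..<length xs] = x # map (\<lambda>k. (f ^^ Suc k) x) [0..<length ys]"
        unfolding xs by (simp add: map_upt_Suc del: upt_Suc)
      also have "map (\<lambda>k. (f ^^ Suc k) x) [0..<length ys] = ys"
        by (subst ih(1)) (simp add: funpow_Suc_right del: funpow.simps)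
      finally show ?thesis
        using xs ih(2) by (simp add: funpow_Suc_right del: funpow.simps)
    qed
  qed
  then show "xs = map (\<lambda>k. (f ^^ k) x) [0..<length xs]" "(f ^^ length xs) x = y" "x \<in> set xs"
    by auto
qed

lemma range_funpow_periodic:
  assumes "0 < p" "(f ^^ p) x = x"
  shows "range (\<lambda>k. (f ^^ k) x) = (\<lambda>k. (f ^^ k) x) ` {..<p}"
proof -
  have "(f ^^ k) x \<in> (\<lambda>k. (f ^^ k) x) ` {..<p}" for k
    using funpow_mod_eq[OF assms(2), of k] assms(1) by (metis imageI lessThan_iff mod_less_divisor)
  then show ?thesis by auto
qed

lemma range_funpow_periodic_shift:
  assumes "0 < p" "(f ^^ p) x = x"
  shows "range (\<lambda>k. (f ^^ k) ((f ^^ i) x)) = range (\<lambda>k. (f ^^ k) x)"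
proof
  show "range (\<lambda>k. (f ^^ k) ((f ^^ i) x)) \<subseteq> range (\<lambda>k. (f ^^ k) x)"
    by (auto simp flip: funpow_add comp_apply[of "f ^^ _" "f ^^ _"])
next
  have "(f ^^ j) x = (f ^^ (j + p * i - i)) ((f ^^ i) x)" for j
  proof -
    have "(f ^^ j) x = (f ^^ ((j + p * i) mod p)) x"
      using funpow_mod_eq[OF assms(2), of j] by simp
    also have "\<dots> = (f ^^ (j + p * i)) x"
      using funpow_mod_eq[OF assms(2)] .
    also have "\<dots> = (f ^^ (j + p * i - i + i)) x"
      using assms(1) by (cases p) (simp_all add: ac_simps)
    also have "\<dots> = (f ^^ (j + p * i - i)) ((f ^^ i) x)"
      by (simp add: funpow_add)
    finally show ?thesis .
  qed
  then show "range (\<lambda>k. (f ^^ k) x) \<subseteq> range (\<lambda>k. (f ^^ k) ((f ^^ i) x))"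
    by blast
qed

lemma iter_until_cycle:
  assumes "iter_until m f x x = Some c" "y \<in> set c"
  shows "range (\<lambda>k. (f ^^ k) y) = set c"
proof -
  note c = iter_until_SomeD[OF assms(1)]
  have period: "0 < length c" "(f ^^ length c) x = x"
    using c(2,3) by auto
  obtain i where "y = (f ^^ i) x"
    using assms(2) by (subst (asm) c(1)) auto
  then have "range (\<lambda>k. (f ^^ k) y) = range (\<lambda>k. (f ^^ k) x)"
    using range_funpow_periodic_shift[OF period] by simp
  also have "\<dots> = (\<lambda>k. (f ^^ k) x) ` {..<length c}"
    using range_funpow_periodic[OF period] .
  also have "\<dots> = set c"
    by (subst (2) c(1)) (auto simp: atLeast0LessThan)
  finally show ?thesis .
qed

fun cycles :: "nat \<Rightarrow> ('a \<Rightarrow> 'a) \<Rightarrow> 'a list \<Rightarrow> 'a list list option" where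
  "cycles m f [] = Some []"
| "cycles m f (x # xs) =
     (case iter_until m f x x of
        None \<Rightarrow> None
      | Some c \<Rightarrow> map_option ((#) c) (cycles m f (filter (\<lambda>y. y \<notin> set c) xs)))"

lemma cycles_SomeD:
  assumes "cycles m f xs = Some cs"
  shows "set (map set cs) = (\<lambda>x. range (\<lambda>k. (f ^^ k) x)) ` set xs"
    and "distinct (map set cs)"
proof -
  have "set (map set cs) = (\<lambda>x. range (\<lambda>k. (f ^^ k) x)) ` set xs \<and> distinct (map set cs)"
    using assms
  proof (induction m f xs arbitrary: cs rule: cycles.induct)
    case (1 m f)
    then show ?case by simp
  next
    case (2 m f x xs)
    let ?orbit = "\<lambda>x. range (\<lambda>k. (f ^^ k) x)"
    obtain c cs' where c: "iter_until m f x x = Some c"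
      and cs': "cycles m f (filter (\<lambda>y. y \<notin> set c) xs) = Some cs'" and cs: "cs = c # cs'"
      using "2.prems" by (auto split: option.splits)
    note IH = "2.IH"[OF c cs']
    have orbit_c: "?orbit y = set c" if "y \<in> set c" for y
      using iter_until_cycle[OF c that] .
    have orbit_self: "y \<in> ?orbit y" for y
      by (metis funpow_0 rangeI)
    have "x \<in> set c"
      using iter_until_SomeD(3)[OF c] .
    then have "?orbit ` set (x # xs) = insert (set c) (?orbit ` set (filter (\<lambda>y. y \<notin> set c) xs))"
      using orbit_c by auto
    moreover have "set c \<notin> ?orbit ` set (filter (\<lambda>y. y \<notin> set c) xs)"
      using orbit_self by auto
    ultimately show ?case
      using IH cs by auto
  qed
  then show "set (map set cs) = (\<lambda>x. range (\<lambda>k. (f ^^ k) x)) ` set xs" "distinct (map set cs)"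
    by auto
qed

lemma cycles_orbit_sizes:
  assumes "cycles m f xs = Some cs"
  shows "image_mset card (mset_set ((\<lambda>x. range (\<lambda>k. (f ^^ k) x)) ` set xs))
    = mset (map (card \<circ> set) cs)"
  using mset_set_set[OF cycles_SomeD(2)[OF assms]]
  by (simp add: cycles_SomeD(1)[OF assms, symmetric] image_mset.compositionality)

definition list_index :: "'a list \<Rightarrow> 'a \<Rightarrow> nat" where
  "list_index xs x = length (takeWhile (\<lambda>y. y \<noteq> x) xs)"

lemma list_index_nth:
  assumes "distinct xs" "i < length xs"
  shows "list_index xs (xs ! i) = i"
proof -
  have "takeWhile (\<lambda>y. y \<noteq> xs ! i) xs = take i xs"
    using assms by (intro takeWhile_eq_take_P_nth) (auto simp: nth_eq_iff_index_eq)
  then show ?thesis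
    using assms(2) by (simp add: list_index_def)
qed

definition edge_inv_list :: "nat \<Rightarrow> nat list \<Rightarrow> bool list \<Rightarrow> nat \<times> nat \<Rightarrow> nat \<times> nat" where
  "edge_inv_list n ps ss h =
     (let v = fst h; d = snd h; j = list_index ps v; sg = (!) ss in
      if d = 0 then (Suc v mod n, 2)
      else if d = 2 then ((v + n - 1) mod n, 0)
      else if d = beta_out sg v then
        (let w = ps ! (Suc j mod n) in (w, beta_in sg w))
      else
        (let w = ps ! ((j + n - 1) mod n) in (w, beta_out sg w)))"

lemma face_perm_eq_list:
  assumes pi: "bij_betw pi {0..<n} {0..<n}" and h: "h \<in> half_edges n"
  shows "face_perm n pi sg h = (rot \<circ> edge_inv_list n (map pi [0..<n]) (map sg [0..<n])) h"
    and "face_perm n pi sg h \<in> half_edges n"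
proof -
  obtain v d where hv: "h = (v, d)" "v < n" "d < 4"
    using h by (auto simp: half_edges_def)
  define j where "j = inv_into {0..<n} pi v"
  have v: "v \<in> pi ` {0..<n}"
    using pi hv by (auto simp: bij_betw_def)
  have j: "j < n" "pi j = v"
    unfolding j_def using inv_into_into[OF v] f_inv_into_f[OF v] by auto
  have idx: "list_index (map pi [0..<n]) v = j"
    using list_index_nth[of "map pi [0..<n]" j] pi j by (simp add: bij_betw_def distinct_map)
  have pi_n: "pi i < n" if "i < n" for i
    using pi that by (auto simp: bij_betw_def)
  have mods: "Suc j mod n < n" "(j + n - 1) mod n < n" "Suc v mod n < n" "(v + n - 1) mod n < n"
    using hv by auto
  have "edge_inv n pi sg h = edge_inv_list n (map pi [0..<n]) (map sg [0..<n]) h"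
    using hv j idx pi_n mods
    unfolding edge_inv_def edge_inv_list_def beta_out_def beta_in_def
    by (simp add: Let_def j_def[symmetric])
  then show "face_perm n pi sg h = (rot \<circ> edge_inv_list n (map pi [0..<n]) (map sg [0..<n])) h"
    by (simp add: face_perm_def)
  show "face_perm n pi sg h \<in> half_edges n"
    using hv j pi_n mods
    unfolding face_perm_def edge_inv_def rot_def half_edges_def
    by (simp add: Let_def j_def[symmetric])
qed

lemma funpow_eq_on_invariant:
  assumes "\<And>x. x \<in> A \<Longrightarrow> f x = g x" and "\<And>x. x \<in> A \<Longrightarrow> f x \<in> A" and "x \<in> A"
  shows "(f ^^ k) x = (g ^^ k) x"
proof -
  have "(f ^^ k) x = (g ^^ k) x \<and> (f ^^ k) x \<in> A"
    by (induction k) (use assms in auto)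
  then show ?thesis ..
qed

definition half_edge_list :: "nat \<Rightarrow> (nat \<times> nat) list" where
  "half_edge_list n = List.product [0..<n] [0..<4]"

lemma set_half_edge_list: "set (half_edge_list n) = half_edges n"
  by (auto simp: half_edge_list_def half_edges_def)

definition face_sizes_list :: "nat \<Rightarrow> nat list \<Rightarrow> bool list \<Rightarrow> nat multiset option" where
  "face_sizes_list n ps ss =
     map_option (\<lambda>cs. mset (map (card \<circ> set) cs))
       (cycles (4 * n) (rot \<circ> edge_inv_list n ps ss) (half_edge_list n))"

lemma face_sizes_eq_list:
  assumes pi: "bij_betw pi {0..<n} {0..<n}"
    and M: "face_sizes_list n (map pi [0..<n]) (map sg [0..<n]) = Some M"
  shows "face_sizes n pi sg = M"
proof -
  let ?f = "rot \<circ> edge_inv_list n (map pi [0..<n]) (map sg [0..<n])"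
  obtain cs where cs: "cycles (4 * n) ?f (half_edge_list n) = Some cs"
    and M: "M = mset (map (card \<circ> set) cs)"
    using M by (auto simp: face_sizes_list_def)
  have "face_of n pi sg h = range (\<lambda>k. (?f ^^ k) h)" if "h \<in> half_edges n" for h
  proof -
    have "(face_perm n pi sg ^^ k) h = (?f ^^ k) h" for k
      by (rule funpow_eq_on_invariant[where A = "half_edges n"])
        (use face_perm_eq_list[OF pi] that in auto)
    then show ?thesis
      by (simp add: face_of_def full_SetCompr_eq)
  qed
  then have "faces n pi sg = (\<lambda>h. range (\<lambda>k. (?f ^^ k) h)) ` set (half_edge_list n)"
    by (simp add: faces_def set_half_edge_list)
  then show ?thesis
    by (simp add: face_sizes_def cycles_orbit_sizes[OF cs] M)
qed

lemma filling_pair_iff_face_sizes: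
  "filling_pair g n pi sg \<longleftrightarrow>
     1 \<le> n \<and> bij_betw pi {0..<n} {0..<n} \<and>
     int n - 2 * int n + int (size (face_sizes n pi sg)) = 2 - 2 * int g \<and>
     2 \<notin># face_sizes n pi sg"
proof -
  have "finite (faces n pi sg)"
    by (simp add: faces_def half_edges_def)
  then have "size (face_sizes n pi sg) = card (faces n pi sg)"
    and "set_mset (face_sizes n pi sg) = card ` faces n pi sg"
    by (simp_all add: face_sizes_def)
  then show ?thesis
    by (auto simp: filling_pair_def)
qed

text \<open>
  The enumeration is split into constants so that \<open>code_simp\<close> only ever unfolds a
  configuration whose arguments are concrete lists, never one with symbolic \<open>ps\<close> or \<open>ss\<close>.
\<close>

definition genus2_config_ok :: "nat \<Rightarrow> nat list \<Rightarrow> bool list \<Rightarrow> bool" where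
  "genus2_config_ok n ps ss =
     (case face_sizes_list n ps ss of
        None \<Rightarrow> False
      | Some M \<Rightarrow> int (size M) = int n - 2 \<and> 2 \<notin># M \<longrightarrow> M \<in> {{#4, 12#}, {#8, 8#}})"

definition genus2_perm_ok :: "nat \<Rightarrow> nat list \<Rightarrow> bool" where
  "genus2_perm_ok n ps = list_all (genus2_config_ok n ps) (List.n_lists n [True, False])"

definition genus2_configs_ok :: "nat \<Rightarrow> bool" where
  "genus2_configs_ok n = list_all (genus2_perm_ok n) (filter distinct (List.n_lists n [0..<n]))"

lemma genus2_configs_ok_le_4:
  assumes "n \<le> 4"
  shows "genus2_configs_ok n"
proof -
  have "genus2_configs_ok 0" "genus2_configs_ok 1" "genus2_configs_ok 2" "genus2_configs_ok 3"
    "genus2_configs_ok 4"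
    by code_simp+
  moreover have "n \<in> {0, 1, 2, 3, 4}"
    using assms by auto
  ultimately show ?thesis
    by auto
qed

lemma genus2_configs_okD:
  assumes "genus2_configs_ok n" and "bij_betw pi {0..<n} {0..<n}"
  shows "genus2_config_ok n (map pi [0..<n]) (map sg [0..<n])"
proof -
  have "map pi [0..<n] \<in> set (filter distinct (List.n_lists n [0..<n]))"
    using assms(2) by (auto simp: set_n_lists bij_betw_def distinct_map)
  moreover have "map sg [0..<n] \<in> set (List.n_lists n [True, False])"
    by (auto simp: set_n_lists)
  ultimately show ?thesis
    using assms(1) by (simp add: genus2_configs_ok_def genus2_perm_ok_def list_all_iff)
qed

lemma genus2_face_sizes_le_4:
  assumes fp: "filling_pair 2 n pi sg" and "n \<le> 4"
  shows "face_sizes n pi sg \<in> {{#4, 12#}, {#8, 8#}}"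
proof -
  have pi: "bij_betw pi {0..<n} {0..<n}"
    and "int (size (face_sizes n pi sg)) = int n - 2" and "2 \<notin># face_sizes n pi sg"
    using fp by (auto simp: filling_pair_iff_face_sizes)
  moreover obtain M where M: "face_sizes_list n (map pi [0..<n]) (map sg [0..<n]) = Some M"
    and "int (size M) = int n - 2 \<and> 2 \<notin># M \<longrightarrow> M \<in> {{#4, 12#}, {#8, 8#}}"
    using genus2_configs_okD[OF genus2_configs_ok_le_4[OF \<open>n \<le> 4\<close>] pi, of sg]
    by (auto simp: genus2_config_ok_def split: option.splits)
  moreover have "face_sizes n pi sg = M"
    using face_sizes_eq_list[OF pi M] .
  ultimately show ?thesis
    by simp
qed

lemma filling_pair_genus2_4: "filling_pair 2 4 ((!) [0, 1, 3, 2]) (\<lambda>_. True)"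
proof -
  have pi: "bij_betw ((!) [0, 1, 3, 2]) {0..<4} {0..<4::nat}"
    by (rule bij_betw_nth) auto
  have "face_sizes_list 4 (map ((!) [0, 1, 3, 2]) [0..<4]) (map (\<lambda>_. True) [0..<4])
      = Some {#4, 12#}"
    by code_simp
  then have "face_sizes 4 ((!) [0, 1, 3, 2]) (\<lambda>_. True) = {#4, 12#}"
    by (rule face_sizes_eq_list[OF pi])
  then show ?thesis
    using pi by (simp add: filling_pair_iff_face_sizes)
qed

theorem theorem1p1:
  fixes n :: nat and pi :: "nat \<Rightarrow> nat" and sg :: "nat \<Rightarrow> bool"
  assumes "minimal_filling_pair 2 n pi sg"
  shows "face_sizes n pi sg = {#4, 12#} \<or> face_sizes n pi sg = {#8, 8#}"
proof -
  have "filling_pair 2 n pi sg" and "n \<le> 4"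
    using assms filling_pair_genus2_4 unfolding minimal_filling_pair_def by blast+
  then show ?thesis
    using genus2_face_sizes_le_4 by blast
qed

end
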